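(* Let $f=\frac1n\sum_{i=1}^nf_i$ with $x^*$ a minimizer, $\mathbf W\succ0$, and $\mathcal D$ a distribution of sketch matrices such that there is $\mathcal L_2>0$ with $\mathbb{E}_{\mathcal D}\|(\mathbf G(x)-\mathbf G(x^* ))\Pi_{\mathbf S}\|_{\mathbf W^{-1}}^2\le2\mathcal L_2(f(x)-f(x^* ))$ for all $x$. Then the iterates of JacSketch satisfy $$\mathbb{E}_{\mathcal D}\|\mathbf J^{k+1}-\mathbf G(x^* )\|_{\mathbf W^{-1}}^2\le(1-\kappa)\|\mathbf J^k-\mathbf G(x^* )\|_{\mathbf W^{-1}}^2+2\mathcal L_2(f(x^k)-f(x^* )),$$ where the expectation is over $\mathbf S_k\sim\mathcal D$ conditional on $x^k,\mathbf J^k$.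
   Context: $\mathbf G(x)=[\nabla f_1(x),\dots,\nabla f_n(x)]\in\mathbb{R}^{d\times n}$; $\|\mathbf X\|_{\mathbf W^{-1}}^2=\mathrm{Tr}(\mathbf X\mathbf W^{-1}\mathbf X^\top)$; $\Pi_{\mathbf S}=\mathbf S(\mathbf S^\top\mathbf W\mathbf S)^\dagger\mathbf S^\top\mathbf W$; $\kappa=\lambda_{\min}(\mathbb{E}_{\mathcal D}[\Pi_{\mathbf S}])$. JacSketch: sample $\mathbf S_k\sim\mathcal D$ independently, $\mathbf J^{k+1}=\mathbf J^k+(\mathbf G(x^k)-\mathbf J^k)\Pi_{\mathbf S_k}$, $g^k=\frac1n\mathbf J^ke+\frac{\theta_{\mathbf S_k}}n(\mathbf G(x^k)-\mathbf J^k)\Pi_{\mathbf S_k}e$, $x^{k+1}=x^k-\alpha g^k$ ($e$ all-ones, $\theta_{\mathbf S}$ a random variable depending on $\mathbf S$). *)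

theory Defs
  imports "HOL-Analysis.Analysis" "HOL-Probability.Probability"
begin

definition pinv :: "real^'m^'m \<Rightarrow> real^'m^'m" where
  "pinv A = (THE B. A ** B ** A = A \<and> B ** A ** B = B \<and>
                     transpose (A ** B) = A ** B \<and> transpose (B ** A) = B ** A)"

definition normWinv2 :: "real^'n^'n \<Rightarrow> real^'n^'d \<Rightarrow> real" where
  "normWinv2 W X = trace (X ** matrix_inv W ** transpose X)"

definition sketch_proj :: "real^'n^'n \<Rightarrow> real^'t^'n \<Rightarrow> real^'n^'n" where
  "sketch_proj W S = S ** pinv (transpose S ** W ** S) ** transpose S ** W"

definition real_eigenvalues :: "real^'n^'n \<Rightarrow> real set" where
  "real_eigenvalues A = {c. \<exists>v. v \<noteq> 0 \<and> A *v v = c *\<^sub>R v}"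

definition lambda_min :: "real^'n^'n \<Rightarrow> real" where
  "lambda_min A = Inf (real_eigenvalues A)"

text \<open>Jacobian G(x): column i is the gradient of f_i at x.\<close>
definition jac :: "('n \<Rightarrow> real^'d \<Rightarrow> real^'d) \<Rightarrow> real^'d \<Rightarrow> real^'n^'d" where
  "jac gradf x = (\<chi> a i. gradf i x $ a)"

definition jac_update :: "real^'n^'n \<Rightarrow> real^'n^'d \<Rightarrow> real^'n^'d \<Rightarrow> real^'t^'n \<Rightarrow> real^'n^'d" where
  "jac_update W Gx J S = J + (Gx - J) ** sketch_proj W S"

end

theory Submission
  imports Defs
begin

text \<open>
  With A = J - G(x*), B = G(x) - G(x*) and Pi = Pi_S the new error is J' - G(x*) = A (I - Pi) + B Pi.
  Both Pi W^-1 and Pi W^-1 Pi^T equal S (S^T W S)^+ S^T, so the cross terms of the W^-1-norm vanish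
  and ||J' - G(x*)||^2 = ||A||^2 - ||A Pi||^2 + ||B Pi||^2. In expectation the last term is bounded
  by the hypothesis on L2, while E ||A Pi||^2 = tr (A E[Pi] W^-1 A^T) >= lambda_min (E[Pi]) ||A||^2,
  because lambda_min (E[Pi]) is the minimum of the generalized Rayleigh quotient
  a^T E[Pi] W^-1 a / a^T W^-1 a.
\<close>

lemma matrix_add_rdistrib:
  fixes A B :: "'a::semiring_1^'n^'m"
  shows "(A + B) ** C = A ** C + B ** C"
  by (vector matrix_matrix_mult_def sum.distrib[symmetric] field_simps)

lemma matrix_diff_rdistrib:
  fixes A B :: "'a::ring_1^'n^'m"
  shows "(A - B) ** C = A ** C - B ** C"
  by (vector matrix_matrix_mult_def sum_subtractf[symmetric] field_simps)

lemma matrix_diff_ldistrib: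
  fixes A :: "'a::ring_1^'n^'m"
  shows "A ** (B - C) = A ** B - A ** C"
  by (vector matrix_matrix_mult_def sum_subtractf[symmetric] field_simps)

lemma transpose_add: "transpose (A + B) = transpose A + transpose B"
  by (vector transpose_def)

lemma transpose_diff: "transpose (A - B) = transpose A - transpose B"
  by (vector transpose_def)

lemma trace_scaleR: "trace (c *\<^sub>R (A::real^'n^'n)) = c * trace A"
  by (simp add: trace_def sum_distrib_left)

lemma inner_matrix_vector_mult_transpose:
  "(x::real^'m) \<bullet> ((A::real^'n^'m) *v y) = (transpose A *v x) \<bullet> y"
  by (metis dot_lmul_matrix transpose_matrix_vector)

lemma bounded_linear_transpose: "bounded_linear (transpose :: real^'n^'m \<Rightarrow> real^'m^'n)"
  unfolding linear_conv_bounded_linear[symmetric]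
  by (rule linearI) (simp_all add: transpose_add transpose_scalar)

lemma bounded_linear_matrix_mult_right: "bounded_linear (\<lambda>P::real^'n^'m. P ** (C::real^'k^'n))"
  unfolding linear_conv_bounded_linear[symmetric]
  by (rule linearI) (simp_all add: matrix_add_rdistrib scalar_matrix_assoc)

lemma bounded_linear_trace_mult:
  "bounded_linear (\<lambda>P::real^'n^'m. trace ((X::real^'m^'k) ** P ** (Y::real^'k^'n)))"
  unfolding linear_conv_bounded_linear[symmetric]
  by (rule linearI)
    (simp_all add: matrix_add_ldistrib matrix_add_rdistrib trace_add matrix_scalar_ac
      scalar_matrix_assoc[symmetric] trace_scaleR)

lemma trace_quadratic_form:
  fixes X :: "real^'n^'d" and Q :: "real^'n^'n"
  shows "trace (X ** Q ** transpose X) = (\<Sum>i\<in>UNIV. X$i \<bullet> (Q *v X$i))"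
proof -
  have "(X ** Q ** transpose X)$i$i = X$i \<bullet> (Q *v X$i)" for i
    unfolding matrix_matrix_mult_def transpose_def matrix_vector_mult_def inner_vec_def
    by (simp add: sum_distrib_left sum_distrib_right ac_simps)
      (subst sum.swap, simp add: ac_simps)
  then show ?thesis by (simp add: trace_def)
qed

lemma trace_quadratic_form_nonneg:
  fixes X :: "real^'n^'d" and Q :: "real^'n^'n"
  assumes "\<And>v. 0 \<le> v \<bullet> (Q *v v)"
  shows "0 \<le> trace (X ** Q ** transpose X)"
  unfolding trace_quadratic_form by (rule sum_nonneg) (rule assms)

lemma trace_quadratic_form_mono:
  fixes X :: "real^'n^'d" and Q R :: "real^'n^'n"
  assumes "\<And>v. c * (v \<bullet> (R *v v)) \<le> v \<bullet> (Q *v v)"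
  shows "c * trace (X ** R ** transpose X) \<le> trace (X ** Q ** transpose X)"
  unfolding trace_quadratic_form sum_distrib_left by (rule sum_mono) (rule assms)

lemma psd_quadratic_form_eq_0_imp_kernel:
  fixes R :: "real^'n^'n"
  assumes R_sym: "transpose R = R" and R_psd: "\<And>a. 0 \<le> a \<bullet> (R *v a)"
    and v: "v \<bullet> (R *v v) = 0"
  shows "R *v v = 0"
proof -
  define w where "w = R *v v"
  define c where "c = w \<bullet> (R *v w)"
  have vRw: "v \<bullet> (R *v w) = w \<bullet> w"
    using inner_matrix_vector_mult_transpose[of v R w] R_sym
    unfolding w_def by (simp add: inner_commute)
  have "\<forall>t. 2 * t * (w \<bullet> w) \<le> t\<^sup>2 * c"
  proof
    fix t :: real
    have "0 \<le> (v - t *\<^sub>R w) \<bullet> (R *v (v - t *\<^sub>R w))" by (rule R_psd)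
    also have "\<dots> = t\<^sup>2 * c - 2 * t * (w \<bullet> w)"
      using v vRw unfolding c_def w_def
      by (simp add: algebra_simps inner_commute power2_eq_square)
    finally show "2 * t * (w \<bullet> w) \<le> t\<^sup>2 * c" by simp
  qed
  then have "w \<bullet> w \<le> 0"
  proof (rule contrapos_pp)
    assume "\<not> w \<bullet> w \<le> 0"
    then have q: "0 < w \<bullet> w" by linarith
    define t where "t = (w \<bullet> w) / (\<bar>c\<bar> + 1)"
    have t: "0 < t" using q unfolding t_def by simp
    have "t * c \<le> t * \<bar>c\<bar>" using t by (simp add: mult_left_mono)
    also have "\<dots> < w \<bullet> w" using q unfolding t_def by (simp add: field_simps)
    finally have "t * (t * c) < t * (w \<bullet> w)" using t by (rule mult_strict_left_mono)
    moreover have "0 < t * (w \<bullet> w)" using t q by simp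
    ultimately have "t\<^sup>2 * c < 2 * t * (w \<bullet> w)" by (simp add: power2_eq_square mult.assoc)
    then show "\<not> (\<forall>t. 2 * t * (w \<bullet> w) \<le> t\<^sup>2 * c)" by (auto simp: not_le)
  qed
  then have "w = 0" by (metis inner_eq_zero_iff inner_ge_zero order_antisym)
  then show ?thesis unfolding w_def .
qed

lemma rayleigh_quotient_attains_min:
  fixes Q R :: "real^'n^'n"
  assumes R_pd: "\<And>v. v \<noteq> 0 \<Longrightarrow> 0 < v \<bullet> (R *v v)"
  obtains \<mu> v where "v \<noteq> 0" "v \<bullet> (Q *v v) = \<mu> * (v \<bullet> (R *v v))"
    "\<And>a. \<mu> * (a \<bullet> (R *v a)) \<le> a \<bullet> (Q *v a)"
proof -
  define \<rho> where "\<rho> a = (a \<bullet> (Q *v a)) / (a \<bullet> (R *v a))" for a :: "real^'n"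
  have "continuous_on (sphere 0 1) \<rho>"
    unfolding \<rho>_def
    by (intro continuous_intros linear_continuous_on[OF matrix_vector_mul_bounded_linear])
      (use R_pd in \<open>metis less_irrefl mem_sphere_0 norm_zero zero_neq_one\<close>)
  then obtain v where v: "v \<in> sphere 0 1" and v_min: "\<And>a. a \<in> sphere 0 1 \<Longrightarrow> \<rho> v \<le> \<rho> a"
    using continuous_attains_inf[OF compact_sphere, of 0 1] by fastforce
  have v0: "v \<noteq> 0" using v by auto
  have \<rho>_scaleR: "\<rho> (c *\<^sub>R a) = \<rho> a" if "c \<noteq> 0" for c a
    using that unfolding \<rho>_def by (simp add: matrix_vector_mult_scaleR)
  have "\<rho> v * (a \<bullet> (R *v a)) \<le> a \<bullet> (Q *v a)" for a
  proof (cases "a = 0")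
    case False
    have "\<rho> v \<le> \<rho> ((1 / norm a) *\<^sub>R a)" using False by (intro v_min) simp
    also have "\<dots> = \<rho> a" using False by (intro \<rho>_scaleR) simp
    finally show ?thesis using R_pd[OF False] unfolding \<rho>_def by (simp add: pos_le_divide_eq)
  qed simp
  moreover have "v \<bullet> (Q *v v) = \<rho> v * (v \<bullet> (R *v v))"
    using R_pd[OF v0] unfolding \<rho>_def by simp
  ultimately show thesis using that v0 by blast
qed

lemma rayleigh_min_generalized_eigenvector:
  fixes Q R :: "real^'n^'n"
  assumes Q_sym: "transpose Q = Q" and R_sym: "transpose R = R"
    and R_pd: "\<And>v. v \<noteq> 0 \<Longrightarrow> 0 < v \<bullet> (R *v v)"
  obtains \<mu> v where "v \<noteq> 0" "Q *v v = \<mu> *\<^sub>R (R *v v)"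
    "\<And>a. \<mu> * (a \<bullet> (R *v a)) \<le> a \<bullet> (Q *v a)"
proof -
  obtain \<mu> v where v0: "v \<noteq> 0" and v: "v \<bullet> (Q *v v) = \<mu> * (v \<bullet> (R *v v))"
    and min: "\<And>a. \<mu> * (a \<bullet> (R *v a)) \<le> a \<bullet> (Q *v a)"
    using rayleigh_quotient_attains_min[OF R_pd] by blast
  define M where "M = Q - \<mu> *\<^sub>R R"
  have M_quad: "a \<bullet> (M *v a) = a \<bullet> (Q *v a) - \<mu> * (a \<bullet> (R *v a))" for a
    unfolding M_def
    by (simp add: matrix_vector_mult_diff_rdistrib scaleR_matrix_vector_assoc[symmetric] inner_diff_right)
  have "M *v v = 0"
  proof (rule psd_quadratic_form_eq_0_imp_kernel)
    show "transpose M = M" unfolding M_def using Q_sym R_sym by (simp add: transpose_diff transpose_scalar)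
  qed (use min v in \<open>simp_all add: M_quad\<close>)
  then have "Q *v v = \<mu> *\<^sub>R (R *v v)"
    unfolding M_def by (simp add: matrix_vector_mult_diff_rdistrib scaleR_matrix_vector_assoc[symmetric])
  then show thesis using that v0 min by blast
qed

lemma lambda_min_zero: "lambda_min (0::real^'n^'n) = 0"
proof -
  have "axis undefined (1::real) \<noteq> (0::real^'n)" by (simp add: axis_eq_0_iff)
  then have "real_eigenvalues (0::real^'n^'n) = {0}"
    unfolding real_eigenvalues_def by auto
  then show ?thesis unfolding lambda_min_def by simp
qed

definition penrose_inverse :: "real^'m^'m \<Rightarrow> real^'m^'m \<Rightarrow> bool" where
  "penrose_inverse A B \<longleftrightarrow> A ** B ** A = A \<and> B ** A ** B = B \<and>
     transpose (A ** B) = A ** B \<and> transpose (B ** A) = B ** A"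

lemma penrose_inverse_unique:
  assumes B: "penrose_inverse A B" and C: "penrose_inverse A C"
  shows "B = C"
proof -
  have B1: "A ** B ** A = A" and B2: "B ** A ** B = B"
    and B3: "transpose (A ** B) = A ** B" and B4: "transpose (B ** A) = B ** A"
    using B unfolding penrose_inverse_def by auto
  have C1: "A ** C ** A = A" and C2: "C ** A ** C = C"
    and C3: "transpose (A ** C) = A ** C" and C4: "transpose (C ** A) = C ** A"
    using C unfolding penrose_inverse_def by auto
  have "B = B ** transpose (A ** B)" using B2 B3 by (simp add: matrix_mul_assoc)
  also have "\<dots> = B ** transpose (A ** C ** A ** B)" using C1 by simp
  also have "\<dots> = B ** transpose (A ** B) ** transpose (A ** C)"
    by (simp add: matrix_transpose_mul matrix_mul_assoc)
  also have "\<dots> = B ** A ** C" using B2 B3 C3 by (simp add: matrix_mul_assoc)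
  finally have BAC: "B = B ** A ** C" .
  have "C = transpose (C ** A) ** C" using C2 C4 by simp
  also have "\<dots> = transpose (C ** A ** B ** A) ** C" using B1 by (metis matrix_mul_assoc)
  also have "\<dots> = transpose (B ** A) ** transpose (C ** A) ** C"
    by (simp add: matrix_transpose_mul matrix_mul_assoc)
  also have "\<dots> = B ** A ** C" using C2 C4 B4 by (metis matrix_mul_assoc)
  finally show ?thesis using BAC by simp
qed

lemma pinv_eqI: "penrose_inverse A B \<Longrightarrow> pinv A = B"
  unfolding pinv_def penrose_inverse_def[symmetric]
  by (blast intro: penrose_inverse_unique)

lemma orthogonal_projection_matrix_exists:
  fixes V :: "(real^'n) set"
  assumes "subspace V"
  obtains P :: "real^'n^'n"
  where "transpose P = P" "\<And>x. P *v x \<in> V" "\<And>x. x \<in> V \<Longrightarrow> P *v x = x"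
proof -
  obtain T where T: "pairwise orthogonal T" "independent T" "span T = V"
    using orthogonal_basis_subspace[OF assms] by metis
  define p where "p x = (\<Sum>b\<in>T. (b \<bullet> x / (b \<bullet> b)) *\<^sub>R b)" for x
  have "linear p"
    unfolding p_def
    by (rule linearI)
      (simp_all add: inner_add_right add_divide_distrib scaleR_add_left sum.distrib scaleR_sum_right)
  moreover have "p x \<bullet> y = x \<bullet> p y" for x y
    unfolding p_def by (simp add: inner_sum_left inner_sum_right inner_commute mult.commute)
  moreover have p_V: "p x \<in> V" for x
    unfolding p_def T(3)[symmetric] by (intro span_sum span_scale span_base)
  moreover have "p x = x" if "x \<in> V" for x
  proof -
    have "x - p x \<in> V" using that p_V assms by (simp add: subspace_diff)
    then have "orthogonal (x - p x) (x - p x)"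
      using Gram_Schmidt_step[OF T(1)] T(3) unfolding p_def by blast
    then show ?thesis by (simp add: orthogonal_def)
  qed
  ultimately show thesis
    using that[of "matrix p"] adjoint_unique[of p p] matrix_adjoint[of p] by simp
qed

lemma symmetric_penrose_inverse_exists:
  fixes M :: "real^'m^'m"
  assumes M_sym: "transpose M = M"
  obtains B where "penrose_inverse M B"
proof -
  define K where "K = {x. M *v x = 0}"
  have "subspace K"
    unfolding K_def subspace_def by (simp add: matrix_vector_right_distrib matrix_vector_mult_scaleR)
  \<comment> \<open>the witness is (M + P)^-1 - P, for P the orthogonal projection onto the kernel of M\<close>
  then obtain P :: "real^'m^'m" where P_sym: "transpose P = P"
    and P_range: "\<And>x. P *v x \<in> K" and P_K: "\<And>x. x \<in> K \<Longrightarrow> P *v x = x"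
    using orthogonal_projection_matrix_exists by blast
  have MP_x: "M *v (P *v x) = 0" for x using P_range[of x] unfolding K_def by simp
  have P_ker: "P *v x = x" if "M *v x = 0" for x using P_K that unfolding K_def by simp
  have MP: "M ** P = 0" using MP_x by (simp add: matrix_eq matrix_vector_mul_assoc[symmetric])
  have PM: "P ** M = 0"
    by (metis MP M_sym P_sym matrix_transpose_mul transpose_mat mat_0)
  have PP: "P ** P = P" using MP_x P_ker by (simp add: matrix_eq matrix_vector_mul_assoc[symmetric])
  have "x = 0" if "(M + P) *v x = 0" for x
  proof -
    have "P *v ((M + P) *v x) = P *v x"
      by (simp add: matrix_vector_mul_assoc matrix_add_ldistrib PM PP)
    then have "P *v x = 0" using that by simp
    with that have "M *v x = 0" by (simp add: matrix_vector_mult_add_rdistrib)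
    with \<open>P *v x = 0\<close> show "x = 0" using P_ker by simp
  qed
  then obtain C where C_left: "C ** (M + P) = mat 1"
    using matrix_left_invertible_ker by blast
  then have C_right: "(M + P) ** C = mat 1" using matrix_left_right_inverse by blast
  have CP: "C ** P = P"
    using arg_cong[OF C_left, of "\<lambda>X. X ** P"]
    by (simp add: matrix_mul_assoc[symmetric] matrix_add_rdistrib MP PP)
  have PC: "P ** C = P"
    using arg_cong[OF C_right, of "\<lambda>X. P ** X"]
    by (simp add: matrix_mul_assoc matrix_add_ldistrib PM PP)
  have MB: "M ** (C - P) = mat 1 - P"
    using C_right by (simp add: matrix_diff_ldistrib matrix_add_rdistrib MP PC algebra_simps)
  have BM: "(C - P) ** M = mat 1 - P"
    using C_left by (simp add: matrix_diff_rdistrib matrix_add_ldistrib PM CP algebra_simps)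
  have "penrose_inverse M (C - P)"
    unfolding penrose_inverse_def MB BM
    using PM PC PP P_sym by (simp add: matrix_diff_rdistrib matrix_diff_ldistrib transpose_diff)
  then show thesis by (rule that)
qed

lemma pinv_symmetric:
  fixes M :: "real^'m^'m"
  assumes M_sym: "transpose M = M"
  shows "penrose_inverse M (pinv M)" "transpose (pinv M) = pinv M"
proof -
  obtain B where B: "penrose_inverse M B" using symmetric_penrose_inverse_exists[OF M_sym] .
  then show "penrose_inverse M (pinv M)" by (simp add: pinv_eqI)
  have "penrose_inverse M (transpose B)"
    using B M_sym unfolding penrose_inverse_def by (metis matrix_transpose_mul matrix_mul_assoc)
  then show "transpose (pinv M) = pinv M"
    using B by (simp add: pinv_eqI penrose_inverse_unique)
qed

locale weight_matrix =
  fixes W :: "real^'n::finite^'n"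
  assumes W_sym: "transpose W = W"
    and W_pos_def: "\<And>v. v \<noteq> 0 \<Longrightarrow> 0 < v \<bullet> (W *v v)"
begin

lemma matrix_inv_W: "W ** matrix_inv W = mat 1" "matrix_inv W ** W = mat 1"
proof -
  have "x = 0" if "W *v x = 0" for x using W_pos_def[of x] that by force
  then obtain C where "C ** W = mat 1" using matrix_left_invertible_ker by blast
  then have "\<exists>C. W ** C = mat 1 \<and> C ** W = mat 1" using matrix_left_right_inverse by blast
  then have "W ** matrix_inv W = mat 1 \<and> matrix_inv W ** W = mat 1"
    unfolding matrix_inv_def by (rule someI_ex)
  then show "W ** matrix_inv W = mat 1" "matrix_inv W ** W = mat 1" by simp_all
qed

lemma transpose_matrix_inv_W: "transpose (matrix_inv W) = matrix_inv W"
proof -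
  have "transpose (matrix_inv W) ** W = mat 1"
    using arg_cong[OF matrix_inv_W(1), of transpose] W_sym by (simp add: matrix_transpose_mul)
  then have "transpose (matrix_inv W) ** (W ** matrix_inv W) = matrix_inv W"
    by (simp add: matrix_mul_assoc)
  then show ?thesis by (simp add: matrix_inv_W)
qed

lemma matrix_inv_W_pos_def:
  assumes "v \<noteq> 0" shows "0 < v \<bullet> (matrix_inv W *v v)"
proof -
  define u where "u = matrix_inv W *v v"
  have Wu: "W *v u = v" unfolding u_def by (simp add: matrix_vector_mul_assoc matrix_inv_W)
  then have "u \<noteq> 0" using assms by auto
  then have "0 < u \<bullet> (W *v u)" by (rule W_pos_def)
  then show ?thesis using Wu unfolding u_def by (simp add: inner_commute)
qed

lemma matrix_inv_W_psd: "0 \<le> v \<bullet> (matrix_inv W *v v)"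
  using matrix_inv_W_pos_def[of v] by (cases "v = 0") simp_all

lemma sketch_gram_symmetric: "transpose (transpose S ** W ** S) = transpose S ** W ** S"
  using W_sym by (simp add: matrix_transpose_mul matrix_mul_assoc)

lemma sketch_proj_mult_inv:
  "sketch_proj W S ** matrix_inv W = S ** pinv (transpose S ** W ** S) ** transpose S"
  unfolding sketch_proj_def by (simp add: matrix_mul_assoc[symmetric] matrix_inv_W)

lemma sketch_proj_mult_inv_symmetric:
  "transpose (sketch_proj W S ** matrix_inv W) = sketch_proj W S ** matrix_inv W"
  unfolding sketch_proj_mult_inv
  by (simp add: matrix_transpose_mul matrix_mul_assoc pinv_symmetric(2)[OF sketch_gram_symmetric])

lemma sketch_proj_congruence:
  "sketch_proj W S ** matrix_inv W ** transpose (sketch_proj W S) = sketch_proj W S ** matrix_inv W"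
proof -
  define M where "M = transpose S ** W ** S"
  define K where "K = S ** pinv M ** transpose S"
  have K: "sketch_proj W S ** matrix_inv W = K"
    unfolding K_def M_def by (rule sketch_proj_mult_inv)
  have K_sym: "transpose K = K" using sketch_proj_mult_inv_symmetric[of S] unfolding K .
  have "sketch_proj W S = K ** W"
    unfolding K_def M_def sketch_proj_def by (simp add: matrix_mul_assoc)
  then have "transpose (sketch_proj W S) = W ** K"
    using K_sym W_sym by (simp add: matrix_transpose_mul)
  then have "sketch_proj W S ** matrix_inv W ** transpose (sketch_proj W S)
      = S ** (pinv M ** M ** pinv M) ** transpose S"
    unfolding K K_def M_def by (simp add: matrix_mul_assoc)
  also have "\<dots> = K"
    using pinv_symmetric(1)[OF sketch_gram_symmetric[of S], folded M_def]
    unfolding penrose_inverse_def K_def by simp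
  finally show ?thesis unfolding K .
qed

lemma normWinv2_mult_sketch_proj:
  "normWinv2 W (A ** sketch_proj W S) = trace (A ** sketch_proj W S ** matrix_inv W ** transpose A)"
proof -
  let ?P = "sketch_proj W S"
  have "(A ** ?P) ** matrix_inv W ** transpose (A ** ?P)
      = A ** (?P ** matrix_inv W ** transpose ?P) ** transpose A"
    by (simp add: matrix_transpose_mul matrix_mul_assoc)
  then show ?thesis unfolding normWinv2_def sketch_proj_congruence by (simp add: matrix_mul_assoc)
qed

lemma normWinv2_sketch_decomposition:
  "normWinv2 W (X ** (mat 1 - sketch_proj W S) + Y ** sketch_proj W S)
     = normWinv2 W X - normWinv2 W (X ** sketch_proj W S) + normWinv2 W (Y ** sketch_proj W S)"
proof -
  define P where "P = sketch_proj W S"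
  define Wi where "Wi = matrix_inv W"
  define K where "K = P ** Wi"
  have Wi_Pt: "Wi ** transpose P = K"
    using sketch_proj_mult_inv_symmetric[of S] transpose_matrix_inv_W
    unfolding K_def P_def Wi_def by (simp add: matrix_transpose_mul)
  have P_Wi_Pt: "P ** Wi ** transpose P = K"
    unfolding K_def P_def Wi_def by (rule sketch_proj_congruence)
  have "(X ** (mat 1 - P) + Y ** P) ** Wi ** transpose (X ** (mat 1 - P) + Y ** P)
      = X ** ((mat 1 - P) ** Wi ** transpose (mat 1 - P)) ** transpose X
        + X ** ((mat 1 - P) ** Wi ** transpose P) ** transpose Y
        + Y ** (P ** Wi ** transpose (mat 1 - P)) ** transpose X
        + Y ** (P ** Wi ** transpose P) ** transpose Y"
    by (simp add: transpose_add matrix_add_ldistrib matrix_add_rdistrib matrix_transpose_mul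
        matrix_mul_assoc)
  also have "\<dots> = X ** (Wi - K) ** transpose X + Y ** K ** transpose Y"
    using Wi_Pt P_Wi_Pt K_def
    by (simp add: transpose_diff matrix_diff_ldistrib matrix_diff_rdistrib matrix_mul_assoc)
  finally have "normWinv2 W (X ** (mat 1 - P) + Y ** P)
      = normWinv2 W X - trace (X ** K ** transpose X) + trace (Y ** K ** transpose Y)"
    unfolding normWinv2_def Wi_def[symmetric]
    by (simp add: matrix_diff_ldistrib matrix_diff_rdistrib trace_add trace_sub)
  then show ?thesis
    unfolding normWinv2_mult_sketch_proj P_def K_def Wi_def by (simp add: matrix_mul_assoc)
qed

lemma normWinv2_nonneg: "0 \<le> normWinv2 W X"
  unfolding normWinv2_def by (rule trace_quadratic_form_nonneg) (rule matrix_inv_W_psd)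

lemma normWinv2_mult_sketch_proj_le: "normWinv2 W (X ** sketch_proj W S) \<le> normWinv2 W X"
  using normWinv2_sketch_decomposition[of X S 0] normWinv2_nonneg[of "X ** (mat 1 - sketch_proj W S)"]
  by (simp add: normWinv2_def[where X = 0] trace_def)

lemma lambda_min_mult_normWinv2_le:
  assumes E_sym: "transpose (E ** matrix_inv W) = E ** matrix_inv W"
  shows "lambda_min E * normWinv2 W A \<le> trace (A ** E ** matrix_inv W ** transpose A)"
proof -
  obtain \<mu> v where v0: "v \<noteq> 0" and v: "(E ** matrix_inv W) *v v = \<mu> *\<^sub>R (matrix_inv W *v v)"
    and min: "\<And>a. \<mu> * (a \<bullet> (matrix_inv W *v a)) \<le> a \<bullet> ((E ** matrix_inv W) *v a)"
    using rayleigh_min_generalized_eigenvector[OF E_sym transpose_matrix_inv_W matrix_inv_W_pos_def]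
    by blast
  have "lambda_min E = \<mu>"
    unfolding lambda_min_def
  proof (rule cInf_eq_minimum)
    have "W *v (matrix_inv W *v v) = v" by (simp add: matrix_vector_mul_assoc matrix_inv_W)
    then have "matrix_inv W *v v \<noteq> 0" using v0 by auto
    moreover have "E *v (matrix_inv W *v v) = \<mu> *\<^sub>R (matrix_inv W *v v)"
      using v by (simp add: matrix_vector_mul_assoc)
    ultimately show "\<mu> \<in> real_eigenvalues E" unfolding real_eigenvalues_def by blast
  next
    fix e assume "e \<in> real_eigenvalues E"
    then obtain u where u0: "u \<noteq> 0" and u: "E *v u = e *\<^sub>R u"
      unfolding real_eigenvalues_def by blast
    have "matrix_inv W *v (W *v u) = u" by (simp add: matrix_vector_mul_assoc matrix_inv_W)
    then have "\<mu> * ((W *v u) \<bullet> u) \<le> e * ((W *v u) \<bullet> u)"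
      using min[of "W *v u"] u by (simp flip: matrix_vector_mul_assoc)
    moreover have "0 < (W *v u) \<bullet> u" using W_pos_def[OF u0] by (simp add: inner_commute)
    ultimately show "\<mu> \<le> e" by simp
  qed
  then show ?thesis
    using trace_quadratic_form_mono[of \<mu> "matrix_inv W" "E ** matrix_inv W" A] min
    unfolding normWinv2_def by (simp add: matrix_mul_assoc)
qed

lemma integrable_normWinv2_mult_sketch_proj:
  assumes "prob_space D" and Pi_meas: "(\<lambda>S. sketch_proj W S) \<in> borel_measurable D"
  shows "integrable D (\<lambda>S. normWinv2 W (A ** sketch_proj W S))"
proof -
  interpret prob_space D by fact
  have "(\<lambda>S. trace (A ** sketch_proj W S ** (matrix_inv W ** transpose A))) \<in> borel_measurable D"
    by (rule borel_measurable_continuous_on[OF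
          linear_continuous_on[OF bounded_linear_trace_mult] Pi_meas])
  then have "(\<lambda>S. normWinv2 W (A ** sketch_proj W S)) \<in> borel_measurable D"
    by (simp add: normWinv2_mult_sketch_proj matrix_mul_assoc)
  then show ?thesis
    by (intro integrable_const_bound[where B = "normWinv2 W A"])
      (simp_all add: normWinv2_nonneg normWinv2_mult_sketch_proj_le)
qed

lemma lambda_min_integral_sketch_proj_le:
  assumes "prob_space D" and Pi_meas: "(\<lambda>S. sketch_proj W S) \<in> borel_measurable D"
  shows "lambda_min (\<integral>S. sketch_proj W S \<partial>D) * normWinv2 W A
    \<le> (\<integral>S. normWinv2 W (A ** sketch_proj W S) \<partial>D)"
proof (cases "integrable D (\<lambda>S. sketch_proj W S)")
  case True
  let ?E = "\<integral>S. sketch_proj W S \<partial>D"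
  have "transpose (?E ** matrix_inv W) = (\<integral>S. transpose (sketch_proj W S ** matrix_inv W) \<partial>D)"
    using integral_bounded_linear[OF bounded_linear_matrix_mult_right[of "matrix_inv W"] True]
      integral_bounded_linear[OF bounded_linear_transpose
        integrable_bounded_linear[OF bounded_linear_matrix_mult_right[of "matrix_inv W"] True]]
    by simp
  also have "\<dots> = ?E ** matrix_inv W"
    using integral_bounded_linear[OF bounded_linear_matrix_mult_right[of "matrix_inv W"] True]
    by (simp add: sketch_proj_mult_inv_symmetric)
  finally have "lambda_min ?E * normWinv2 W A \<le> trace (A ** ?E ** matrix_inv W ** transpose A)"
    by (rule lambda_min_mult_normWinv2_le)
  also have "\<dots> = (\<integral>S. normWinv2 W (A ** sketch_proj W S) \<partial>D)"
    using integral_bounded_linear[OF bounded_linear_trace_mult True, of A "matrix_inv W ** transpose A"]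
    by (simp add: normWinv2_mult_sketch_proj matrix_mul_assoc)
  finally show ?thesis .
next
  case False
  \<comment> \<open>the Bochner integral of a non-integrable function is 0, whose only eigenvalue is 0\<close>
  then have "(\<integral>S. sketch_proj W S \<partial>D) = 0" by (rule not_integrable_integral_eq)
  then show ?thesis by (simp add: lambda_min_zero normWinv2_nonneg)
qed

end

theorem lemma3p9:
  fixes fi :: "'n::finite \<Rightarrow> real^'d \<Rightarrow> real"
    and gradf :: "'n \<Rightarrow> real^'d \<Rightarrow> real^'d"
    and f :: "real^'d \<Rightarrow> real"
    and xstar :: "real^'d"
    and W :: "real^'n^'n"
    and D :: "(real^'t^'n) measure"
    and L2 :: real
    and x :: "real^'d"
    and J :: "real^'n^'d"
  assumes grad: "\<And>i y. (fi i has_derivative (\<lambda>h. gradf i y \<bullet> h)) (at y)"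
    and f_def: "\<And>y. f y = (1 / real CARD('n)) * (\<Sum>i\<in>UNIV. fi i y)"
    and xstar_min: "\<And>y. f xstar \<le> f y"
    and W_sym: "transpose W = W"
    and W_pd: "\<And>v. v \<noteq> 0 \<Longrightarrow> v \<bullet> (W *v v) > 0"
    and D_prob: "prob_space D"
    and Pi_meas: "(\<lambda>S. sketch_proj W S) \<in> borel_measurable D"
    and L2_pos: "L2 > 0"
    and L2_bound: "\<And>y. (\<integral>S. normWinv2 W ((jac gradf y - jac gradf xstar) ** sketch_proj W S) \<partial>D)
                        \<le> 2 * L2 * (f y - f xstar)"
  shows "(\<integral>S. normWinv2 W (jac_update W (jac gradf x) J S - jac gradf xstar) \<partial>D)
           \<le> (1 - lambda_min (\<integral>S. sketch_proj W S \<partial>D)) * normWinv2 W (J - jac gradf xstar)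
             + 2 * L2 * (f x - f xstar)"
proof -
  \<comment> \<open>grad, f_def, xstar_min and L2_pos only serve to justify L2_bound in the paper\<close>
  interpret weight_matrix W using W_sym W_pd by unfold_locales
  interpret prob_space D by (rule D_prob)
  define A where "A = J - jac gradf xstar"
  define B where "B = jac gradf x - jac gradf xstar"
  have update: "jac_update W (jac gradf x) J S - jac gradf xstar
      = A ** (mat 1 - sketch_proj W S) + B ** sketch_proj W S" for S
    unfolding jac_update_def A_def B_def by (simp add: matrix_diff_ldistrib matrix_diff_rdistrib)
  have "(\<integral>S. normWinv2 W (jac_update W (jac gradf x) J S - jac gradf xstar) \<partial>D)
      = normWinv2 W A - (\<integral>S. normWinv2 W (A ** sketch_proj W S) \<partial>D)
        + (\<integral>S. normWinv2 W (B ** sketch_proj W S) \<partial>D)"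
    unfolding update normWinv2_sketch_decomposition
    using integrable_normWinv2_mult_sketch_proj[OF D_prob Pi_meas, of A]
      integrable_normWinv2_mult_sketch_proj[OF D_prob Pi_meas, of B]
    by (simp add: Bochner_Integration.integral_add Bochner_Integration.integral_diff prob_space)
  also have "\<dots> \<le> normWinv2 W A - lambda_min (\<integral>S. sketch_proj W S \<partial>D) * normWinv2 W A
      + 2 * L2 * (f x - f xstar)"
    using lambda_min_integral_sketch_proj_le[OF D_prob Pi_meas, of A] L2_bound[of x]
    unfolding B_def by linarith
  finally show ?thesis unfolding A_def by (simp add: algebra_simps)
qed

end
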